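(* Assume the Framework and the Purification Postulate. For every system $\mathrm A$ and every pair of pure states $\psi,\psi'\in\mathfrak S_1(\mathrm A)$ there is a reversible channel $\mathcal U\in\mathbf G_{\mathrm A}$ such that $\psi'=\mathcal U\psi$.
   Context: Framework. We work in an operational-probabilistic theory: there is a collection of systems $\mathrm A,\mathrm B,\dots$, closed under a composition $\mathrm A\mathrm B$ (associative, symmetric up to a reversible swap, with a trivial system $\mathrm I$ satisfying $\mathrm A\mathrm I=\mathrm A$); for each pair of systems a set $\mathfrak T(\mathrm A,\mathrm B)$ of transformations; a test from $\mathrm A$ to $\mathrm B$ is a finite collection $\{\mathcal C_i\}_{i\in X}\subseteq\mathfrak T(\mathrm A,\mathrm B)$, and every transformation belongs to some test. Tests are closed under sequential composition, parallel composition ($\otimes$), coarse-graining (summing outcomes over the blocks of a partition of $X$) and conditioning (choosing the next test depending on the outcome of the previous one). States of $\mathrm A$ are the elements of $\mathfrak S(\mathrm A):=\mathfrak T(\mathrm I,\mathrm A)$, effects are the elements of $\mathfrak T(\mathrm A,\mathrm I)$, and transformations $\mathrm I\to\mathrm I$ are probabilities in $[0,1]$ (those of a test sum to $1$; composition is multiplication). An effect $a$ and a state $\rho$ give the probability $(a|\rho)$. States (effects) are identified when they give equal probabilities on all effects (states); transformations $\mathcal C,\mathcal C'$ are identified when $\mathcal C\otimes\mathcal I_{\mathrm S}$ and $\mathcal C'\otimes\mathcal I_{\mathrm S}$ act identically on all states of $\mathrm A\mathrm S$ for every system $\mathrm S$. States span a finite-dimensional real vector space $\mathfrak S_{\mathbb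 R}(\mathrm A)$, transformations act linearly, and $\mathfrak T_{\mathbb R}(\mathrm A,\mathrm B)$ is the real span of $\mathfrak T(\mathrm A,\mathrm B)$. Standing assumptions: (i) causality: each system $\mathrm A$ has a unique deterministic effect $e_{\mathrm A}$ (the effect forming a one-outcome observation test), and $e_{\mathrm A\mathrm B}=e_{\mathrm A}\otimes e_{\mathrm B}$; (ii) local discriminability: if two states of $\mathrm A\mathrm B$ differ, some product effect $a\otimes b$ gives them different probabilities; (iii) all sets of states are closed, the theory is not deterministic (hence all sets of states, effects and transformations are convex), and perfectly distinguishable states exist. A state $\rho$ is normalized if $(e|\rho)=1$; $\mathfrak S_1(\mathrm A)$ is the set of normalized states. A channel is a $\mathcal C\in\mathfrak T(\mathrm A,\mathrm B)$ with $e_{\mathrm B}\circ\mathcal C=e_{\mathrm A}$. A channel $\mathcal U\in\mathfrak T(\mathrm A,\mathrm B)$ is reversible if some channel $\mathcal W\in\mathfrak T(\mathrm B,\mathrm A)$ satisfies $\mathcal W\mathcal U=\mathcal I_{\mathrm A}$, $\mathcal U\mathcal W=\mathcal I_{\mathrm B}$; $\mathbf G_{\mathrm A}$ is the group of reversible channels on $\mathrm A$. The marginal of a state $\sigma$ of $\mathrm A\mathrm B$ on $\mathrm A$ is $(\mathcal I_{\mathrm A}\otimes e_{\mathrm B})\sigma$. Refinement. For $\mathcal C\in\mathfrak T(\mathrm A,\mathrm B)$, write $\mathcal D\prec\mathcal C$ if there are a test $\{\mathcal D_j\}_{j\in Y}$ and $Y_0\subseteq Y$ with $\mathcal C=\sum_{j\in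 Y_0}\mathcal D_j$ and $\mathcal D\in\{\mathcal D_j\}_{j\in Y_0}$; the refinement set is $D_{\mathcal C}=\{\mathcal D:\mathcal D\prec\mathcal C\}$. $\mathcal C$ is atomic if $\mathcal D\prec\mathcal C$ implies $\mathcal D=\lambda\mathcal C$ for some $\lambda\in[0,1]$. A pure state is an atomic state; a state is mixed otherwise. Purification Postulate. For every $\rho\in\mathfrak S_1(\mathrm A)$ there are a system $\mathrm B$ and a pure $\Psi\in\mathfrak S_1(\mathrm A\mathrm B)$ with $(\mathcal I_{\mathrm A}\otimes e_{\mathrm B})\Psi=\rho$ (a purification of $\rho$, with purifying system $\mathrm B$); and if $\Psi,\Psi'\in\mathfrak S_1(\mathrm A\mathrm B)$ are purifications of the same state, then $\Psi'=(\mathcal I_{\mathrm A}\otimes\mathcal U)\Psi$ for some $\mathcal U\in\mathbf G_{\mathrm B}$. *)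

theory Defs
  imports "HOL-Analysis.Analysis"
begin

text \<open>
  Systems have type 's; all transformations
  (of all input/output pairs) live in one real vector space 't (the direct sum of the spaces
  spanned by the transformations of each pair of systems), so that coarse-graining is vector
  addition.  Equality of 't is the operational identification of transformations.
  Tests are finite collections of transformations, indexed by list positions.
\<close>

record ('s, 't) opt =
  o_cmp   :: "'s \<Rightarrow> 's \<Rightarrow> 's"
  o_triv  :: "'s"
  o_tr    :: "'s \<Rightarrow> 's \<Rightarrow> 't set"
  o_tests :: "'s \<Rightarrow> 's \<Rightarrow> 't list set"
  o_seq   :: "'t \<Rightarrow> 't \<Rightarrow> 't"      \<comment> \<open>o_seq C D = C after D\<close>
  o_par   :: "'t \<Rightarrow> 't \<Rightarrow> 't"
  o_id    :: "'s \<Rightarrow> 't"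
  o_swap  :: "'s \<Rightarrow> 's \<Rightarrow> 't"
  o_prob  :: "'t \<Rightarrow> real"

definition states :: "('s, 't::real_normed_vector) opt \<Rightarrow> 's \<Rightarrow> 't set" where
  "states T A = o_tr T (o_triv T) A"

definition effects :: "('s, 't::real_normed_vector) opt \<Rightarrow> 's \<Rightarrow> 't set" where
  "effects T A = o_tr T A (o_triv T)"

definition pairing :: "('s, 't::real_normed_vector) opt \<Rightarrow> 't \<Rightarrow> 't \<Rightarrow> real" where
  "pairing T a \<rho> = o_prob T (o_seq T a \<rho>)"

definition det_eff :: "('s, 't::real_normed_vector) opt \<Rightarrow> 's \<Rightarrow> 't" where
  "det_eff T A = (THE e. [e] \<in> o_tests T A (o_triv T))"

definition normalized :: "('s, 't::real_normed_vector) opt \<Rightarrow> 's \<Rightarrow> 't \<Rightarrow> bool" where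
  "normalized T A \<rho> \<longleftrightarrow> \<rho> \<in> states T A \<and> pairing T (det_eff T A) \<rho> = 1"

definition channel :: "('s, 't::real_normed_vector) opt \<Rightarrow> 's \<Rightarrow> 's \<Rightarrow> 't \<Rightarrow> bool" where
  "channel T A B C \<longleftrightarrow> C \<in> o_tr T A B \<and> o_seq T (det_eff T B) C = det_eff T A"

definition reversible :: "('s, 't::real_normed_vector) opt \<Rightarrow> 's \<Rightarrow> 's \<Rightarrow> 't \<Rightarrow> bool" where
  "reversible T A B U \<longleftrightarrow> channel T A B U \<and>
     (\<exists>W. channel T B A W \<and> o_seq T W U = o_id T A \<and> o_seq T U W = o_id T B)"

definition revG :: "('s, 't::real_normed_vector) opt \<Rightarrow> 's \<Rightarrow> 't set" where
  "revG T A = {U. reversible T A A U}"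

definition refines :: "('s, 't::real_normed_vector) opt \<Rightarrow> 's \<Rightarrow> 's \<Rightarrow> 't \<Rightarrow> 't \<Rightarrow> bool" where
  "refines T A B D C \<longleftrightarrow>
     (\<exists>ts \<in> o_tests T A B. \<exists>Y0 \<subseteq> {..<length ts}.
        C = (\<Sum>j\<in>Y0. ts ! j) \<and> D \<in> (\<lambda>j. ts ! j) ` Y0)"

definition atomic :: "('s, 't::real_normed_vector) opt \<Rightarrow> 's \<Rightarrow> 's \<Rightarrow> 't \<Rightarrow> bool" where
  "atomic T A B C \<longleftrightarrow> C \<in> o_tr T A B \<and>
     (\<forall>D. refines T A B D C \<longrightarrow> (\<exists>c\<in>{0..1}. D = c *\<^sub>R C))"

definition pure_state :: "('s, 't::real_normed_vector) opt \<Rightarrow> 's \<Rightarrow> 't \<Rightarrow> bool" where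
  "pure_state T A \<psi> \<longleftrightarrow> atomic T (o_triv T) A \<psi>"

text \<open>Marginal on A of a state of AB: (I_A \<otimes> e_B) sigma (a state of AI = A).\<close>
definition marginal :: "('s, 't::real_normed_vector) opt \<Rightarrow> 's \<Rightarrow> 's \<Rightarrow> 't \<Rightarrow> 't" where
  "marginal T A B \<sigma> = o_seq T (o_par T (o_id T A) (det_eff T B)) \<sigma>"

definition purification ::
  "('s, 't::real_normed_vector) opt \<Rightarrow> 's \<Rightarrow> 's \<Rightarrow> 't \<Rightarrow> 't \<Rightarrow> bool" where
  "purification T A B \<rho> \<Psi> \<longleftrightarrow>
     normalized T (o_cmp T A B) \<Psi> \<and> pure_state T (o_cmp T A B) \<Psi> \<and> marginal T A B \<Psi> = \<rho>"

definition purification_postulate :: "('s, 't::real_normed_vector) opt \<Rightarrow> bool" where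
  "purification_postulate T \<longleftrightarrow>
     (\<forall>A \<rho>. normalized T A \<rho> \<longrightarrow> (\<exists>B \<Psi>. purification T A B \<rho> \<Psi>)) \<and>
     (\<forall>A B \<rho> \<Psi> \<Psi>'. purification T A B \<rho> \<Psi> \<and> purification T A B \<rho> \<Psi>' \<longrightarrow>
        (\<exists>U \<in> revG T B. \<Psi>' = o_seq T (o_par T (o_id T A) U) \<Psi>))"

definition systems_ax :: "('s, 't::real_normed_vector) opt \<Rightarrow> bool" where
  "systems_ax T \<longleftrightarrow>
     (\<forall>A B C. o_cmp T (o_cmp T A B) C = o_cmp T A (o_cmp T B C)) \<and>
     (\<forall>A. o_cmp T A (o_triv T) = A)"

definition category_ax :: "('s, 't::real_normed_vector) opt \<Rightarrow> bool" where
  "category_ax T \<longleftrightarrow>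
     (\<forall>A. o_id T A \<in> o_tr T A A) \<and>
     (\<forall>A B C. C \<in> o_tr T A B \<longrightarrow> o_seq T C (o_id T A) = C \<and> o_seq T (o_id T B) C = C) \<and>
     (\<forall>A B C C' D. C \<in> o_tr T B C' \<longrightarrow> D \<in> o_tr T A B \<longrightarrow> o_seq T C D \<in> o_tr T A C') \<and>
     (\<forall>x y z. o_seq T (o_seq T x y) z = o_seq T x (o_seq T y z)) \<and>
     (\<forall>A A' B B' C D. C \<in> o_tr T A B \<longrightarrow> D \<in> o_tr T A' B' \<longrightarrow>
        o_par T C D \<in> o_tr T (o_cmp T A A') (o_cmp T B B')) \<and>
     (\<forall>A B B2 A' B' B2' C C' D D'. C' \<in> o_tr T A B \<longrightarrow> C \<in> o_tr T B B2 \<longrightarrow>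
        D' \<in> o_tr T A' B' \<longrightarrow> D \<in> o_tr T B' B2' \<longrightarrow>
        o_par T (o_seq T C C') (o_seq T D D') = o_seq T (o_par T C D) (o_par T C' D')) \<and>
     (\<forall>A B. o_par T (o_id T A) (o_id T B) = o_id T (o_cmp T A B)) \<and>
     (\<forall>x y z. o_par T (o_par T x y) z = o_par T x (o_par T y z)) \<and>
     (\<forall>a. linear (o_seq T a)) \<and> (\<forall>b. linear (\<lambda>a. o_seq T a b)) \<and>
     (\<forall>a. linear (o_par T a)) \<and> (\<forall>b. linear (\<lambda>a. o_par T a b))"

definition swap_ax :: "('s, 't::real_normed_vector) opt \<Rightarrow> bool" where
  "swap_ax T \<longleftrightarrow>
     (\<forall>A B. reversible T (o_cmp T A B) (o_cmp T B A) (o_swap T A B)) \<and>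
     (\<forall>A B. o_seq T (o_swap T B A) (o_swap T A B) = o_id T (o_cmp T A B)) \<and>
     (\<forall>A A' B B' C D. C \<in> o_tr T A B \<longrightarrow> D \<in> o_tr T A' B' \<longrightarrow>
        o_seq T (o_swap T B B') (o_par T C D) = o_seq T (o_par T D C) (o_swap T A A'))"

definition prob_ax :: "('s, 't::real_normed_vector) opt \<Rightarrow> bool" where
  "prob_ax T \<longleftrightarrow>
     inj_on (o_prob T) (o_tr T (o_triv T) (o_triv T)) \<and>
     o_prob T ` o_tr T (o_triv T) (o_triv T) \<subseteq> {0..1} \<and>
     linear (o_prob T) \<and>
     (\<forall>p \<in> o_tr T (o_triv T) (o_triv T). \<forall>q \<in> o_tr T (o_triv T) (o_triv T).
        o_prob T (o_seq T p q) = o_prob T p * o_prob T q) \<and>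
     (\<forall>A B C. \<forall>p \<in> o_tr T (o_triv T) (o_triv T). C \<in> o_tr T A B \<longrightarrow>
        o_par T C p = o_prob T p *\<^sub>R C) \<and>
     (\<forall>ts \<in> o_tests T (o_triv T) (o_triv T). (\<Sum>t\<leftarrow>ts. o_prob T t) = 1)"

definition tests_ax :: "('s, 't::real_normed_vector) opt \<Rightarrow> bool" where
  "tests_ax T \<longleftrightarrow>
     (\<forall>A B ts. ts \<in> o_tests T A B \<longrightarrow> ts \<noteq> [] \<and> set ts \<subseteq> o_tr T A B) \<and>
     (\<forall>A B C. C \<in> o_tr T A B \<longrightarrow> (\<exists>ts \<in> o_tests T A B. C \<in> set ts)) \<and>
     (\<forall>A. [o_id T A] \<in> o_tests T A A) \<and>
     \<comment> \<open>sequential composition with conditioning (plain sequential composition is the case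
         of a constant choice f)\<close>
     (\<forall>A B C us f. us \<in> o_tests T A B \<longrightarrow> (\<forall>i<length us. f i \<in> o_tests T B C) \<longrightarrow>
        concat (map (\<lambda>i. map (\<lambda>t. o_seq T t (us ! i)) (f i)) [0..<length us]) \<in> o_tests T A C) \<and>
     \<comment> \<open>parallel composition\<close>
     (\<forall>A B A' B' ts us. ts \<in> o_tests T A B \<longrightarrow> us \<in> o_tests T A' B' \<longrightarrow>
        [o_par T t u. t \<leftarrow> ts, u \<leftarrow> us] \<in> o_tests T (o_cmp T A A') (o_cmp T B B')) \<and>
     \<comment> \<open>coarse-graining over a partition into m nonempty blocks g^-1(k), k < m
         (bijective g gives reindexing)\<close>
     (\<forall>A B ts (g :: nat \<Rightarrow> nat) m. ts \<in> o_tests T A B \<longrightarrow> g ` {..<length ts} = {..<m} \<longrightarrow>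
        map (\<lambda>k. \<Sum>j \<in> {j. j < length ts \<and> g j = k}. ts ! j) [0..<m] \<in> o_tests T A B)"

definition identification_ax :: "('s, 't::real_normed_vector) opt \<Rightarrow> bool" where
  "identification_ax T \<longleftrightarrow>
     (\<forall>A. \<forall>\<rho> \<in> states T A. \<forall>\<sigma> \<in> states T A.
        (\<forall>a \<in> effects T A. pairing T a \<rho> = pairing T a \<sigma>) \<longrightarrow> \<rho> = \<sigma>) \<and>
     (\<forall>A. \<forall>a \<in> effects T A. \<forall>b \<in> effects T A.
        (\<forall>\<rho> \<in> states T A. pairing T a \<rho> = pairing T b \<rho>) \<longrightarrow> a = b) \<and>
     (\<forall>A B. \<forall>C \<in> o_tr T A B. \<forall>C' \<in> o_tr T A B.
        (\<forall>S. \<forall>\<rho> \<in> states T (o_cmp T A S).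
           o_seq T (o_par T C (o_id T S)) \<rho> = o_seq T (o_par T C' (o_id T S)) \<rho>) \<longrightarrow> C = C')"

definition finite_dim_ax :: "('s, 't::real_normed_vector) opt \<Rightarrow> bool" where
  "finite_dim_ax T \<longleftrightarrow> (\<forall>A. \<exists>F. finite F \<and> span (states T A) = span F)"

definition causality_ax :: "('s, 't::real_normed_vector) opt \<Rightarrow> bool" where
  "causality_ax T \<longleftrightarrow>
     (\<forall>A. \<exists>!e. [e] \<in> o_tests T A (o_triv T)) \<and>
     (\<forall>A B. det_eff T (o_cmp T A B) = o_par T (det_eff T A) (det_eff T B))"

definition local_discr_ax :: "('s, 't::real_normed_vector) opt \<Rightarrow> bool" where
  "local_discr_ax T \<longleftrightarrow>
     (\<forall>A B. \<forall>\<rho> \<in> states T (o_cmp T A B). \<forall>\<sigma> \<in> states T (o_cmp T A B). \<rho> \<noteq> \<sigma> \<longrightarrow>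
        (\<exists>a \<in> effects T A. \<exists>b \<in> effects T B.
           pairing T (o_par T a b) \<rho> \<noteq> pairing T (o_par T a b) \<sigma>))"

definition regularity_ax :: "('s, 't::real_normed_vector) opt \<Rightarrow> bool" where
  "regularity_ax T \<longleftrightarrow>
     (\<forall>A. closed (states T A)) \<and>
     (\<exists>p \<in> o_tr T (o_triv T) (o_triv T). 0 < o_prob T p \<and> o_prob T p < 1) \<and>
     (\<forall>A B. convex (o_tr T A B)) \<and>
     (\<exists>A \<rho>1 \<rho>2 a1 a2. normalized T A \<rho>1 \<and> normalized T A \<rho>2 \<and>
        [a1, a2] \<in> o_tests T A (o_triv T) \<and>
        pairing T a1 \<rho>1 = 1 \<and> pairing T a2 \<rho>1 = 0 \<and>
        pairing T a1 \<rho>2 = 0 \<and> pairing T a2 \<rho>2 = 1)"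

definition opt_framework :: "('s, 't::real_normed_vector) opt \<Rightarrow> bool" where
  "opt_framework T \<longleftrightarrow> systems_ax T \<and> category_ax T \<and> swap_ax T \<and> prob_ax T \<and>
     tests_ax T \<and> identification_ax T \<and> finite_dim_ax T \<and> causality_ax T \<and>
     local_discr_ax T \<and> regularity_ax T"

end

theory Submission
  imports Defs
begin

text \<open>
  Idea: a normalized pure state \<psi> of A, viewed through the reversible swap A = AI \<rightarrow> IA, is a
  pure state of the composite IA whose marginal on the trivial system I is the deterministic
  state of I (the swap of e_A \<psi>, which is the same for every normalized state).  Hence two
  normalized pure states \<psi>, \<psi>' of A yield two purifications, with purifying system A, of one and
  the same state of I, and uniqueness of purification supplies a reversible V on A relating them;
  moving V through the swap gives \<psi>' = V \<psi>.
\<close>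

lemma block_index_bound:
  fixes i n k m :: nat
  assumes "i < n" "k < m"
  shows "i * m + k < n * m"
proof -
  have "i * m + k < Suc i * m" using assms(2) by simp
  also have "\<dots> \<le> n * m" using assms(1) by (intro mult_le_mono1) simp
  finally show ?thesis .
qed

lemma length_concat_blocks:
  "length (concat (map (\<lambda>i. map (g i) ws) [0..<n])) = n * length ws"
  by (induction n) auto

lemma nth_concat_blocks:
  assumes "i < n" "k < length ws"
  shows "concat (map (\<lambda>i. map (g i) ws) [0..<n]) ! (i * length ws + k) = g i (ws ! k)"
  using assms
proof (induction n arbitrary: i)
  case 0
  then show ?case by simp
next
  case (Suc n)
  show ?case
  proof (cases "i < n")
    case True
    then have "i * length ws + k < n * length ws"
      using Suc.prems(2) by (rule block_index_bound)
    then show ?thesis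
      using Suc.IH[OF True Suc.prems(2)] length_concat_blocks[of g ws n]
      by (simp add: nth_append)
  next
    case False
    then have "i = n" using Suc.prems(1) by simp
    then show ?thesis using length_concat_blocks[of g ws n] Suc.prems(2) by (simp add: nth_append)
  qed
qed

lemma category_facts:
  assumes "category_ax T"
  shows cat_id: "o_id T A \<in> o_tr T A A"
    and cat_idl: "C \<in> o_tr T A B \<Longrightarrow> o_seq T (o_id T B) C = C"
    and cat_seq: "C \<in> o_tr T B S \<Longrightarrow> D \<in> o_tr T A B \<Longrightarrow> o_seq T C D \<in> o_tr T A S"
    and cat_assoc: "o_seq T (o_seq T x y) z = o_seq T x (o_seq T y z)"
    and cat_linear: "linear (o_seq T a)"
  using assms unfolding category_ax_def by simp_all

lemma tests_facts:
  assumes "tests_ax T"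
  shows tests_tr: "ts \<in> o_tests T A B \<Longrightarrow> set ts \<subseteq> o_tr T A B"
    and tests_exist: "C \<in> o_tr T A B \<Longrightarrow> \<exists>ts \<in> o_tests T A B. C \<in> set ts"
    and tests_id: "[o_id T A] \<in> o_tests T A A"
    and tests_seq: "us \<in> o_tests T A B \<Longrightarrow> (\<forall>i<length us. f i \<in> o_tests T B Z) \<Longrightarrow>
        concat (map (\<lambda>i. map (\<lambda>t. o_seq T t (us ! i)) (f i)) [0..<length us]) \<in> o_tests T A Z"
  using assms unfolding tests_ax_def by simp_all

text \<open>Post-composing with any transformation W maps a refinement of C to a refinement of W C:
  compose the refining test with a test containing W and keep the W-outcomes.\<close>
lemma refines_post_compose:
  assumes cat: "category_ax T" and tax: "tests_ax T"
    and ref: "refines T X Y D C" and W: "W \<in> o_tr T Y Z"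
  shows "refines T X Z (o_seq T W D) (o_seq T W C)"
proof -
  obtain ts Y0 where ts: "ts \<in> o_tests T X Y" and Y0: "Y0 \<subseteq> {..<length ts}"
    and C: "C = (\<Sum>j\<in>Y0. ts ! j)" and D: "D \<in> (\<lambda>j. ts ! j) ` Y0"
    using ref unfolding refines_def by blast
  obtain ws where ws: "ws \<in> o_tests T Y Z" and "W \<in> set ws"
    using tests_exist[OF tax W] by blast
  then obtain k where k: "k < length ws" "ws ! k = W" by (meson in_set_conv_nth)
  define big where "big = concat (map (\<lambda>i. map (\<lambda>t. o_seq T t (ts ! i)) ws) [0..<length ts])"
  define pos where "pos = (\<lambda>i. i * length ws + k)"
  have big: "big \<in> o_tests T X Z"
    unfolding big_def using tests_seq[OF tax ts, of "\<lambda>_. ws"] ws by simp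
  have big_pos: "big ! pos i = o_seq T W (ts ! i)" if "i \<in> Y0" for i
    using that Y0 k unfolding big_def pos_def by (auto simp: nth_concat_blocks)
  have pos_range: "pos ` Y0 \<subseteq> {..<length big}"
    using Y0 k block_index_bound unfolding big_def pos_def length_concat_blocks by auto
  have "inj_on pos Y0" using k(1) unfolding pos_def by (intro inj_onI) auto
  then have "(\<Sum>j\<in>pos ` Y0. big ! j) = (\<Sum>i\<in>Y0. o_seq T W (ts ! i))"
    by (simp add: sum.reindex big_pos)
  also have "\<dots> = o_seq T W C"
    unfolding C using cat_linear[OF cat] by (simp add: linear_sum)
  finally have WC: "o_seq T W C = (\<Sum>j\<in>pos ` Y0. big ! j)" by simp
  have "o_seq T W D \<in> (\<lambda>j. big ! j) ` pos ` Y0" using D big_pos by force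
  then show ?thesis unfolding refines_def using big pos_range WC by blast
qed

text \<open>An atomic transformation stays atomic after an invertible post-processing U:
  a refinement D of U C yields the refinement W D = c C of C, whence D = U W D = c U C.\<close>
lemma atomic_post_invertible:
  assumes cat: "category_ax T" and tax: "tests_ax T"
    and U: "U \<in> o_tr T Y Z" and W: "W \<in> o_tr T Z Y"
    and WU: "o_seq T W U = o_id T Y" and UW: "o_seq T U W = o_id T Z"
    and at: "atomic T X Y C"
  shows "atomic T X Z (o_seq T U C)"
proof -
  have C: "C \<in> o_tr T X Y"
    and C_at: "\<And>D. refines T X Y D C \<Longrightarrow> \<exists>c\<in>{0..1}. D = c *\<^sub>R C"
    using at unfolding atomic_def by auto
  have "\<exists>c\<in>{0..1}. D = c *\<^sub>R o_seq T U C" if ref: "refines T X Z D (o_seq T U C)" for D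
  proof -
    have "refines T X Y (o_seq T W D) C"
      using refines_post_compose[OF cat tax ref W] cat_idl[OF cat C]
      by (simp add: WU flip: cat_assoc[OF cat])
    then obtain c where c: "c \<in> {0..1}" "o_seq T W D = c *\<^sub>R C" using C_at by blast
    from ref obtain ts where "ts \<in> o_tests T X Z" "D \<in> set ts"
      unfolding refines_def by (auto intro: nth_mem)
    then have "D \<in> o_tr T X Z" using tests_tr[OF tax] by blast
    then have "D = o_seq T U (o_seq T W D)"
      using cat_idl[OF cat] by (simp add: UW flip: cat_assoc[OF cat])
    also have "\<dots> = c *\<^sub>R o_seq T U C"
      using c(2) cat_linear[OF cat] by (simp add: linear_scale)
    finally show ?thesis using c(1) by blast
  qed
  then show ?thesis unfolding atomic_def using cat_seq[OF cat U C] by blast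
qed

lemma det_eff_test:
  assumes "causality_ax T"
  shows "[det_eff T X] \<in> o_tests T X (o_triv T)"
  unfolding det_eff_def by (rule theI') (use assms in \<open>simp add: causality_ax_def\<close>)

lemma det_eff_tr:
  assumes "causality_ax T" "tests_ax T"
  shows "det_eff T X \<in> o_tr T X (o_triv T)"
  using det_eff_test[OF assms(1)] tests_tr[OF assms(2)] by fastforce

lemma channel_normalized:
  assumes "category_ax T" "channel T X Y C" "normalized T X \<rho>"
  shows "normalized T Y (o_seq T C \<rho>)"
  using assms cat_seq[OF assms(1)] cat_assoc[OF assms(1)]
  unfolding normalized_def channel_def states_def pairing_def by metis

text \<open>All normalized states of A give the same transformation I \<rightarrow> I under e_A, since
  transformations I \<rightarrow> I are determined by the probability they represent.\<close>
lemma normalized_det_eff_eq: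
  assumes "category_ax T" "causality_ax T" "tests_ax T" "prob_ax T"
    and "normalized T A \<psi>" "normalized T A \<psi>'"
  shows "o_seq T (det_eff T A) \<psi> = o_seq T (det_eff T A) \<psi>'"
proof -
  have "o_seq T (det_eff T A) \<phi> \<in> o_tr T (o_triv T) (o_triv T)" if "normalized T A \<phi>" for \<phi>
    using that cat_seq[OF assms(1) det_eff_tr[OF assms(2,3)]]
    unfolding normalized_def states_def by blast
  moreover have "inj_on (o_prob T) (o_tr T (o_triv T) (o_triv T))"
    using assms(4) unfolding prob_ax_def by simp
  ultimately show ?thesis
    using assms(5,6) unfolding normalized_def pairing_def inj_on_def by metis
qed

text \<open>Tensoring with the identity of I changes nothing: it is the tensor with probability 1.\<close>
lemma par_id_triv:
  assumes "prob_ax T" "tests_ax T" "category_ax T" "C \<in> o_tr T X Y"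
  shows "o_par T C (o_id T (o_triv T)) = C"
proof -
  have "o_prob T (o_id T (o_triv T)) = 1"
    using assms(1) tests_id[OF assms(2)] unfolding prob_ax_def by fastforce
  then show ?thesis
    using assms cat_id[OF assms(3)] unfolding prob_ax_def by simp
qed

lemma swap_triv_reversible:
  assumes "opt_framework T"
  shows "reversible T A (o_cmp T (o_triv T) A) (o_swap T A (o_triv T))"
  using assms unfolding opt_framework_def swap_ax_def systems_ax_def by metis

lemma swap_triv_natural:
  assumes "opt_framework T" "C \<in> o_tr T A B"
  shows "o_seq T (o_par T (o_id T (o_triv T)) C) (o_swap T A (o_triv T))
         = o_seq T (o_swap T B (o_triv T)) C"
proof -
  have ax: "swap_ax T" "prob_ax T" "tests_ax T" "category_ax T"
    using assms(1) unfolding opt_framework_def by simp_all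
  have "o_seq T (o_swap T B (o_triv T)) (o_par T C (o_id T (o_triv T)))
        = o_seq T (o_par T (o_id T (o_triv T)) C) (o_swap T A (o_triv T))"
    using ax(1) assms(2) cat_id[OF ax(4)] unfolding swap_ax_def by blast
  then show ?thesis using par_id_triv[OF ax(2-4) assms(2)] by simp
qed

lemma swapped_state_purification:
  assumes fw: "opt_framework T" and n: "normalized T A \<psi>" and p: "pure_state T A \<psi>"
  shows "purification T (o_triv T) A
           (o_seq T (o_swap T (o_triv T) (o_triv T)) (o_seq T (det_eff T A) \<psi>))
           (o_seq T (o_swap T A (o_triv T)) \<psi>)"
proof -
  let ?I = "o_triv T" and ?S = "o_swap T A (o_triv T)"
  have cat: "category_ax T" and tax: "tests_ax T" and caus: "causality_ax T"
    using fw unfolding opt_framework_def by simp_all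
  obtain W where S: "channel T A (o_cmp T ?I A) ?S" and W: "channel T (o_cmp T ?I A) A W"
    and WS: "o_seq T W ?S = o_id T A" and SW: "o_seq T ?S W = o_id T (o_cmp T ?I A)"
    using swap_triv_reversible[OF fw] unfolding reversible_def by blast
  have "pure_state T (o_cmp T ?I A) (o_seq T ?S \<psi>)"
    using atomic_post_invertible[OF cat tax _ _ WS SW] S W p
    unfolding pure_state_def channel_def by blast
  moreover have "marginal T ?I A (o_seq T ?S \<psi>)
                 = o_seq T (o_swap T ?I ?I) (o_seq T (det_eff T A) \<psi>)"
    using swap_triv_natural[OF fw det_eff_tr[OF caus tax]]
    unfolding marginal_def by (simp flip: cat_assoc[OF cat])
  ultimately show ?thesis
    unfolding purification_def using channel_normalized[OF cat S n] by simp
qed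

theorem mainTheorem1:
  fixes T :: "('s, 't::real_normed_vector) opt" and A :: 's and \<psi> \<psi>' :: 't
  assumes "opt_framework T"
    and "purification_postulate T"
    and "normalized T A \<psi>" and "pure_state T A \<psi>"
    and "normalized T A \<psi>'" and "pure_state T A \<psi>'"
  shows "\<exists>U \<in> revG T A. \<psi>' = o_seq T U \<psi>"
proof -
  let ?I = "o_triv T" and ?S = "o_swap T A (o_triv T)"
  have cat: "category_ax T"
    using assms(1) unfolding opt_framework_def by simp
  have "o_seq T (det_eff T A) \<psi>' = o_seq T (det_eff T A) \<psi>"
    using normalized_det_eff_eq assms(1,3,5) unfolding opt_framework_def by metis
  then obtain V where V: "V \<in> revG T A"
    and V_rel: "o_seq T ?S \<psi>' = o_seq T (o_par T (o_id T ?I) V) (o_seq T ?S \<psi>)"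
    using assms(2) swapped_state_purification[OF assms(1)] assms(3-6)
    unfolding purification_postulate_def by metis
  obtain W where WS: "o_seq T W ?S = o_id T A"
    using swap_triv_reversible[OF assms(1)] unfolding reversible_def by blast
  have V_tr: "V \<in> o_tr T A A" and \<psi>_tr: "\<psi> \<in> o_tr T ?I A" and \<psi>'_tr: "\<psi>' \<in> o_tr T ?I A"
    using V assms(3,5) unfolding revG_def reversible_def channel_def normalized_def states_def
    by auto
  have "\<psi>' = o_seq T W (o_seq T ?S \<psi>')"
    using cat_idl[OF cat \<psi>'_tr] by (simp add: WS flip: cat_assoc[OF cat])
  also have "\<dots> = o_seq T W (o_seq T ?S (o_seq T V \<psi>))"
    unfolding V_rel using swap_triv_natural[OF assms(1) V_tr]
    by (simp flip: cat_assoc[OF cat])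
  also have "\<dots> = o_seq T V \<psi>"
    using cat_idl[OF cat cat_seq[OF cat V_tr \<psi>_tr]] by (simp add: WS flip: cat_assoc[OF cat])
  finally show ?thesis using V by blast
qed

end
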